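(* Let $p\in(0,1)$, let $X,\gamma$ satisfy the standing assumptions in the context, let $m>0$ and $0\le x_0<m$. Let $q'=\inf\{\mathrm{VaR}_p(g(X)):g\in\mathcal G_{\rm bd}\}$ and assume $q'>0$ and $\mathbb P(\gamma\le\mathrm{VaR}_p(\gamma))=p$. Then the problem of minimizing $\mathrm{VaR}_p(g(X))$ over $g\in\mathcal G_{\rm bd}$ admits a $\mathbb P$-a.s. unique solution, given by $g_X(X)=m\mathds 1_{\{\gamma>c\}}+q'\mathds 1_{\{\gamma\le c\}}$, where $c=\mathrm{VaR}_p(\gamma)$.
   Context: $(\Omega,\mathcal F,\mathbb P)$ is atomless. $\mathrm{VaR}_p(Y)=\inf\{x:\mathbb P(Y\le x)\ge p\}$. Standing assumptions: $X\ge0$ is a random variable whose distribution has a positive density on its support; $\gamma:\mathbb R\to\mathbb R$ is continuous and strictly positive; $\gamma$ also denotes $\gamma(X)$; $\mathbb E[\gamma]=1$, $\mathbb E[\gamma X]<\infty$. With $\mathcal G_1$ the measurable functions $\mathbb R\to\mathbb R$, $\mathcal G_{\rm bd}=\{g\in\mathcal G_1:\mathbb E[\gamma g(X)]\ge x_0,\ 0\le g(X)\le m\}$. *)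

theory Defs
  imports "HOL-Probability.Probability"
begin

definition VaR :: "'a measure \<Rightarrow> real \<Rightarrow> ('a \<Rightarrow> real) \<Rightarrow> real" where
  "VaR M p Y = Inf {x::real. measure M {\<omega> \<in> space M. Y \<omega> \<le> x} \<ge> p}"

definition atomless :: "'a measure \<Rightarrow> bool" where
  "atomless M \<longleftrightarrow> (\<forall>A \<in> sets M. measure M A > 0 \<longrightarrow>
      (\<exists>B \<in> sets M. B \<subseteq> A \<and> 0 < measure M B \<and> measure M B < measure M A))"

definition in_support :: "'a measure \<Rightarrow> ('a \<Rightarrow> real) \<Rightarrow> real \<Rightarrow> bool" where
  "in_support M X x \<longleftrightarrow> (\<forall>e>0. measure M {\<omega> \<in> space M. X \<omega> \<in> ball x e} > 0)"

definition pos_density_on_support :: "'a measure \<Rightarrow> ('a \<Rightarrow> real) \<Rightarrow> bool" where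
  "pos_density_on_support M X \<longleftrightarrow>
     (\<exists>f. distributed M lborel X f \<and> (\<forall>x. in_support M X x \<longrightarrow> f x > 0))"

definition G_bd :: "'a measure \<Rightarrow> ('a \<Rightarrow> real) \<Rightarrow> (real \<Rightarrow> real) \<Rightarrow> real \<Rightarrow> real
    \<Rightarrow> (real \<Rightarrow> real) set" where
  "G_bd M X \<gamma> x0 m = {g. g \<in> borel_measurable borel \<and>
      (\<integral>\<omega>. \<gamma> (X \<omega>) * g (X \<omega>) \<partial>M) \<ge> x0 \<and>
      (AE \<omega> in M. 0 \<le> g (X \<omega>) \<and> g (X \<omega>) \<le> m)}"

end

theory Submission
  imports Defs
begin

(* Let B = {\<gamma>(X) \<le> c}, so P(B) = p, and let h_v = m - (m - v) 1_B be the threshold payoff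
   with value v on B; its VaR is v.  An admissible g with VaR_p(g(X)) = v \<le> m lies below
   m - (m - v) 1_A for A = {g(X) \<le> v}, and P(A) \<ge> p.  Since B collects the states of smallest
   \<gamma>, E[\<gamma> 1_A] \<ge> E[\<gamma> 1_B] (a Neyman-Pearson argument), so E[\<gamma> g(X)] \<le> E[\<gamma> h_v(X)].
   Hence q' is the least v for which h_v meets the budget x0, and as q' > 0 the budget is met
   with equality by h_q'; equality in both estimates then forces g(X) = h_q'(X) a.s. *)

lemma (in prob_space) VaR_attained:
  fixes Y :: "'a \<Rightarrow> real"
  assumes Y[measurable]: "Y \<in> borel_measurable M" and nonneg: "AE \<omega> in M. 0 \<le> Y \<omega>"
    and "0 < p" and "p \<le> prob {\<omega>\<in>space M. Y \<omega> \<le> y}"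
  shows "p \<le> prob {\<omega>\<in>space M. Y \<omega> \<le> VaR M p Y}" and "0 \<le> VaR M p Y"
proof -
  define F where "F x = prob {\<omega>\<in>space M. Y \<omega> \<le> x}" for x
  define S where "S = {x. p \<le> F x}"
  have VaR_eq: "VaR M p Y = Inf S"
    unfolding VaR_def S_def F_def ..
  have F_mono: "F x \<le> F x'" if "x \<le> x'" for x x'
    unfolding F_def using that by (intro finite_measure_mono) auto
  have F_neg: "F x = 0" if "x < 0" for x
    unfolding F_def using nonneg that by (subst measure_eq_AE[where B = "{}"]) auto
  have S_nonneg: "0 \<le> s" if "s \<in> S" for s
    using that \<open>0 < p\<close> F_neg[of s] unfolding S_def by force
  have S_ne: "S \<noteq> {}"
    using assms(4) unfolding S_def F_def by auto
  show "0 \<le> VaR M p Y"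
    unfolding VaR_eq using S_ne S_nonneg by (intro cInf_greatest) auto
  interpret D: real_distribution "distr M borel Y" by simp
  have "cdf (distr M borel Y) = F"
    unfolding cdf_def F_def by (auto simp: measure_distr vimage_def Int_def conj_commute)
  then have F_lim: "(F \<longlongrightarrow> F (Inf S)) (at_right (Inf S))"
    using D.cdf_is_right_cont[of "Inf S"] by (simp add: continuous_within)
  have "eventually (\<lambda>x. p \<le> F x) (at_right (Inf S))"
    unfolding eventually_at_right_field
  proof (intro exI[of _ "Inf S + 1"] conjI allI impI)
    fix x assume "Inf S < x"
    then obtain s where "s \<in> S" "s < x"
      using cInf_less_iff[OF S_ne] S_nonneg by (auto simp: bdd_below_def)
    then show "p \<le> F x" using F_mono[of s x] unfolding S_def by auto
  qed simp
  then have "p \<le> F (Inf S)"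
    by (intro tendsto_lowerbound[OF F_lim]) simp_all
  then show "p \<le> prob {\<omega>\<in>space M. Y \<omega> \<le> VaR M p Y}"
    unfolding VaR_eq F_def .
qed

lemma (in prob_space) VaR_two_valued:
  assumes "{\<omega>\<in>space M. \<not> P \<omega>} \<in> sets M" and "0 < p" and "p \<le> prob {\<omega>\<in>space M. \<not> P \<omega>}"
    and "v \<le> m"
  shows "VaR M p (\<lambda>\<omega>. if P \<omega> then m else v) = v"
proof -
  have "{x. p \<le> prob {\<omega>\<in>space M. (if P \<omega> then m else v) \<le> x}} = {v..}"
  proof (intro set_eqI iffI)
    fix x assume "x \<in> {x. p \<le> prob {\<omega>\<in>space M. (if P \<omega> then m else v) \<le> x}}"
    moreover have "{\<omega>\<in>space M. (if P \<omega> then m else v) \<le> x} = {}" if "x < v"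
      using that \<open>v \<le> m\<close> by auto
    ultimately show "x \<in> {v..}"
      using \<open>0 < p\<close> by (cases "x < v") auto
  next
    fix x assume "x \<in> {v..}"
    then have "{\<omega>\<in>space M. (if P \<omega> then m else v) \<le> x}
        = (if m \<le> x then space M else {\<omega>\<in>space M. \<not> P \<omega>})"
      by auto
    then show "x \<in> {x. p \<le> prob {\<omega>\<in>space M. (if P \<omega> then m else v) \<le> x}}"
      using assms(1,3) prob_le_1 by (auto simp: prob_space intro: order.trans)
  qed
  then show ?thesis
    unfolding VaR_def by simp
qed

(* Neyman-Pearson: for B = {Z \<le> c} both terms on the right are \<ge> 0 once c \<ge> 0 and P A \<ge> P B. *)
lemma (in finite_measure) integral_mult_indicator_diff:
  fixes Z :: "'a \<Rightarrow> real"
  assumes Z: "integrable M Z" and [measurable]: "A \<in> sets M" "B \<in> sets M"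
  shows "integrable M (\<lambda>\<omega>. (Z \<omega> - c) * (indicator A \<omega> - indicator B \<omega>))"
    and "(\<integral>\<omega>. Z \<omega> * indicator A \<omega> \<partial>M) - (\<integral>\<omega>. Z \<omega> * indicator B \<omega> \<partial>M)
      = (\<integral>\<omega>. (Z \<omega> - c) * (indicator A \<omega> - indicator B \<omega>) \<partial>M) + c * (measure M A - measure M B)"
proof -
  have "integrable M (\<lambda>\<omega>. Z \<omega> * indicator E \<omega>)" and "integrable M (indicator E :: 'a \<Rightarrow> real)"
    if "E \<in> sets M" for E
    using that integrable_real_mult_indicator[OF _ Z] by (simp_all add: less_top[symmetric])
  moreover have "(\<lambda>\<omega>. (Z \<omega> - c) * (indicator A \<omega> - indicator B \<omega>))
      = (\<lambda>\<omega>. (Z \<omega> * indicator A \<omega> - Z \<omega> * indicator B \<omega>) - c * (indicator A \<omega> - indicator B \<omega>))"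
    by (auto simp: algebra_simps)
  ultimately show "integrable M (\<lambda>\<omega>. (Z \<omega> - c) * (indicator A \<omega> - indicator B \<omega>))"
    and "(\<integral>\<omega>. Z \<omega> * indicator A \<omega> \<partial>M) - (\<integral>\<omega>. Z \<omega> * indicator B \<omega> \<partial>M)
      = (\<integral>\<omega>. (Z \<omega> - c) * (indicator A \<omega> - indicator B \<omega>) \<partial>M) + c * (measure M A - measure M B)"
    by simp_all
qed

lemma (in finite_measure) integral_mult_indicator_sublevel_le:
  fixes Z :: "'a \<Rightarrow> real"
  assumes Z: "integrable M Z" and A: "A \<in> sets M" and B: "B = {\<omega>\<in>space M. Z \<omega> \<le> c}"
    and "measure M B \<le> measure M A" and "0 \<le> c"
  shows "(\<integral>\<omega>. Z \<omega> * indicator B \<omega> \<partial>M) \<le> (\<integral>\<omega>. Z \<omega> * indicator A \<omega> \<partial>M)"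
proof -
  have [measurable]: "Z \<in> borel_measurable M" using Z by simp
  have "0 \<le> (\<integral>\<omega>. (Z \<omega> - c) * (indicator A \<omega> - indicator B \<omega>) \<partial>M)"
    unfolding B by (intro integral_nonneg_AE AE_I2) (auto simp: indicator_def)
  moreover have "0 \<le> c * (measure M A - measure M B)"
    using assms(4,5) by simp
  ultimately show ?thesis
    using integral_mult_indicator_diff(2)[OF Z A, of B c] B by simp
qed

lemma (in finite_measure) integral_mult_indicator_sublevel_eq_imp_AE:
  fixes Z :: "'a \<Rightarrow> real"
  assumes Z: "integrable M Z" and A[measurable]: "A \<in> sets M" and B: "B = {\<omega>\<in>space M. Z \<omega> \<le> c}"
    and "measure M B \<le> measure M A" and "0 < c"
    and eq: "(\<integral>\<omega>. Z \<omega> * indicator A \<omega> \<partial>M) = (\<integral>\<omega>. Z \<omega> * indicator B \<omega> \<partial>M)"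
  shows "AE \<omega> in M. indicator A \<omega> = (indicator B \<omega> :: real)"
proof -
  have [measurable]: "Z \<in> borel_measurable M" using Z by simp
  have [measurable]: "B \<in> sets M" unfolding B by measurable
  define D where "D \<omega> = (Z \<omega> - c) * (indicator A \<omega> - indicator B \<omega>)" for \<omega>
  have D_nonneg: "\<omega> \<in> space M \<Longrightarrow> 0 \<le> D \<omega>" for \<omega>
    unfolding D_def B by (auto simp: indicator_def)
  have D_int: "integrable M D"
    unfolding D_def using integral_mult_indicator_diff(1)[OF Z A] by simp
  have D_int_nonneg: "0 \<le> integral\<^sup>L M D"
    using D_nonneg by (intro integral_nonneg_AE AE_I2) auto
  have "integral\<^sup>L M D + c * (measure M A - measure M B) = 0"
    using integral_mult_indicator_diff(2)[OF Z A, of B c] eq unfolding D_def by simp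
  then have "integral\<^sup>L M D = 0" and "measure M A = measure M B"
    using D_int_nonneg assms(4,5) by (auto simp: add_nonneg_eq_0_iff)
  have "AE \<omega> in M. D \<omega> = 0"
    using integral_nonneg_eq_0_iff_AE[OF D_int] D_nonneg \<open>integral\<^sup>L M D = 0\<close> by (simp add: AE_I2)
  then have A_sub_B: "AE \<omega> in M. indicator A \<omega> \<le> (indicator B \<omega> :: real)"
    using AE_space by eventually_elim (auto simp: D_def B indicator_def split: if_splits)
  have "integrable M (\<lambda>\<omega>. indicator B \<omega> - indicator A \<omega> :: real)"
    by (simp add: less_top[symmetric])
  moreover have "(\<integral>\<omega>. indicator B \<omega> - indicator A \<omega> \<partial>M) = (0::real)"
    using \<open>measure M A = measure M B\<close> by (simp add: less_top[symmetric])
  moreover have "AE \<omega> in M. 0 \<le> (indicator B \<omega> - indicator A \<omega> :: real)"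
    using A_sub_B by eventually_elim simp
  ultimately have "AE \<omega> in M. indicator B \<omega> - indicator A \<omega> = (0::real)"
    using integral_nonneg_eq_0_iff_AE by blast
  then show ?thesis
    by eventually_elim simp
qed

locale VaR_minimization = prob_space M for M :: "'a measure" +
  fixes X :: "'a \<Rightarrow> real" and \<gamma> :: "real \<Rightarrow> real" and p m x0 c :: real
  assumes X_measurable[measurable]: "X \<in> borel_measurable M"
    and \<gamma>_measurable[measurable]: "\<gamma> \<in> borel_measurable borel"
    and \<gamma>_pos: "\<And>x. 0 < \<gamma> x"
    and integrable_\<gamma>: "integrable M (\<lambda>\<omega>. \<gamma> (X \<omega>))"
    and integral_\<gamma>: "(\<integral>\<omega>. \<gamma> (X \<omega>) \<partial>M) = 1"
    and p_pos: "0 < p"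
    and budget: "0 \<le> x0" "x0 < m"
    and prob_low_set: "prob {\<omega>\<in>space M. \<gamma> (X \<omega>) \<le> c} = p"
begin

definition low_set :: "'a set" where
  "low_set = {\<omega>\<in>space M. \<gamma> (X \<omega>) \<le> c}"

definition low_set_price :: real where
  "low_set_price = (\<integral>\<omega>. \<gamma> (X \<omega>) * indicator low_set \<omega> \<partial>M)"

definition threshold_payoff :: "real \<Rightarrow> real \<Rightarrow> real" where
  "threshold_payoff v x = (if \<gamma> x > c then m else v)"

definition min_VaR :: real where
  "min_VaR = Inf ((\<lambda>g. VaR M p (\<lambda>\<omega>. g (X \<omega>))) ` G_bd M X \<gamma> x0 m)"

lemma low_set_measurable[measurable]: "low_set \<in> sets M"
  unfolding low_set_def by measurable

lemma threshold_payoff_measurable[measurable]: "threshold_payoff v \<in> borel_measurable borel"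
  unfolding threshold_payoff_def by measurable

lemma c_pos: "0 < c"
proof (rule ccontr)
  assume "\<not> 0 < c"
  then have "c < \<gamma> (X \<omega>)" for \<omega>
    using \<gamma>_pos[of "X \<omega>"] by linarith
  then have "{\<omega>\<in>space M. \<gamma> (X \<omega>) \<le> c} = {}"
    by (auto simp: not_le[symmetric])
  then show False
    using prob_low_set p_pos by (metis measure_empty less_irrefl)
qed

lemma G_bdD:
  assumes "g \<in> G_bd M X \<gamma> x0 m"
  shows "g \<in> borel_measurable borel" and "AE \<omega> in M. 0 \<le> g (X \<omega>) \<and> g (X \<omega>) \<le> m"
    and "x0 \<le> (\<integral>\<omega>. \<gamma> (X \<omega>) * g (X \<omega>) \<partial>M)"
  using assms unfolding G_bd_def by auto

lemma integrable_G_bd: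
  assumes g: "g \<in> G_bd M X \<gamma> x0 m"
  shows "integrable M (\<lambda>\<omega>. \<gamma> (X \<omega>) * g (X \<omega>))"
proof (rule Bochner_Integration.integrable_bound)
  show "integrable M (\<lambda>\<omega>. m * \<gamma> (X \<omega>))"
    using integrable_\<gamma> by simp
  have [measurable]: "g \<in> borel_measurable borel"
    using G_bdD(1)[OF g] .
  show "(\<lambda>\<omega>. \<gamma> (X \<omega>) * g (X \<omega>)) \<in> borel_measurable M"
    by measurable
  show "AE \<omega> in M. norm (\<gamma> (X \<omega>) * g (X \<omega>)) \<le> norm (m * \<gamma> (X \<omega>))"
    using G_bdD(2)[OF g] by eventually_elim
      (simp add: abs_mult abs_of_pos[OF \<gamma>_pos] mult.commute[of m] mult_left_mono less_imp_le[OF \<gamma>_pos])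
qed

lemma VaR_G_bd:
  assumes g: "g \<in> G_bd M X \<gamma> x0 m"
  shows "p \<le> prob {\<omega>\<in>space M. g (X \<omega>) \<le> VaR M p (\<lambda>\<omega>. g (X \<omega>))}"
    and "0 \<le> VaR M p (\<lambda>\<omega>. g (X \<omega>))"
proof -
  have [measurable]: "g \<in> borel_measurable borel"
    using G_bdD(1)[OF g] .
  have "(\<lambda>\<omega>. g (X \<omega>)) \<in> borel_measurable M"
    by measurable
  moreover have "prob {\<omega>\<in>space M. g (X \<omega>) \<le> m} = 1"
    using G_bdD(2)[OF g] by (subst measure_eq_AE[where B = "space M"]) (auto simp: prob_space)
  moreover have "p \<le> 1"
    using prob_low_set prob_le_1 by blast
  moreover have "AE \<omega> in M. 0 \<le> g (X \<omega>)"
    using G_bdD(2)[OF g] by eventually_elim simp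
  ultimately show "p \<le> prob {\<omega>\<in>space M. g (X \<omega>) \<le> VaR M p (\<lambda>\<omega>. g (X \<omega>))}"
    and "0 \<le> VaR M p (\<lambda>\<omega>. g (X \<omega>))"
    using VaR_attained[of "\<lambda>\<omega>. g (X \<omega>)" p m] p_pos by auto
qed

lemma integral_indicator_payoff:
  assumes A[measurable]: "A \<in> sets M"
  shows "integrable M (\<lambda>\<omega>. \<gamma> (X \<omega>) * (m - (m - v) * indicator A \<omega>))"
    and "(\<integral>\<omega>. \<gamma> (X \<omega>) * (m - (m - v) * indicator A \<omega>) \<partial>M)
      = m - (m - v) * (\<integral>\<omega>. \<gamma> (X \<omega>) * indicator A \<omega> \<partial>M)"
proof -
  have "(\<lambda>\<omega>. \<gamma> (X \<omega>) * (m - (m - v) * indicator A \<omega>))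
      = (\<lambda>\<omega>. m * \<gamma> (X \<omega>) - (m - v) * (\<gamma> (X \<omega>) * indicator A \<omega>))"
    by (auto simp: algebra_simps)
  moreover have "integrable M (\<lambda>\<omega>. \<gamma> (X \<omega>) * indicator A \<omega>)"
    using integrable_real_mult_indicator[OF A integrable_\<gamma>] .
  ultimately show "integrable M (\<lambda>\<omega>. \<gamma> (X \<omega>) * (m - (m - v) * indicator A \<omega>))"
    and "(\<integral>\<omega>. \<gamma> (X \<omega>) * (m - (m - v) * indicator A \<omega>) \<partial>M)
      = m - (m - v) * (\<integral>\<omega>. \<gamma> (X \<omega>) * indicator A \<omega> \<partial>M)"
    using integrable_\<gamma> integral_\<gamma> by simp_all
qed

lemma threshold_payoff_eq:
  "\<omega> \<in> space M \<Longrightarrow> threshold_payoff v (X \<omega>) = m - (m - v) * indicator low_set \<omega>"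
  unfolding threshold_payoff_def low_set_def by (auto simp: indicator_def)

lemma integral_threshold_payoff:
  "(\<integral>\<omega>. \<gamma> (X \<omega>) * threshold_payoff v (X \<omega>) \<partial>M) = m - (m - v) * low_set_price"
  unfolding low_set_price_def
  by (subst integral_indicator_payoff(2)[symmetric], simp)
     (intro Bochner_Integration.integral_cong; simp add: threshold_payoff_eq)

lemma low_set_price_nonneg: "0 \<le> low_set_price"
  unfolding low_set_price_def
  by (intro integral_nonneg_AE AE_I2) (simp add: less_imp_le[OF \<gamma>_pos])

lemma threshold_payoff_in_G_bd:
  assumes "0 \<le> v" and "v \<le> m" and "x0 \<le> m - (m - v) * low_set_price"
  shows "threshold_payoff v \<in> G_bd M X \<gamma> x0 m"
  using assms integral_threshold_payoff[of v] unfolding G_bd_def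
  by (auto simp: threshold_payoff_def)

lemma VaR_threshold_payoff:
  assumes "v \<le> m"
  shows "VaR M p (\<lambda>\<omega>. threshold_payoff v (X \<omega>)) = v"
  unfolding threshold_payoff_def
  by (rule VaR_two_valued) (use assms prob_low_set p_pos in \<open>simp_all add: not_less\<close>)

lemma low_set_price_le:
  assumes "A \<in> sets M" and "p \<le> prob A"
  shows "low_set_price \<le> (\<integral>\<omega>. \<gamma> (X \<omega>) * indicator A \<omega> \<partial>M)"
  unfolding low_set_price_def low_set_def
  by (rule integral_mult_indicator_sublevel_le[OF integrable_\<gamma> assms(1) refl])
     (use assms(2) prob_low_set c_pos in auto)

lemma low_set_price_eq_imp_AE:
  assumes "A \<in> sets M" and "p \<le> prob A"
    and "(\<integral>\<omega>. \<gamma> (X \<omega>) * indicator A \<omega> \<partial>M) = low_set_price"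
  shows "AE \<omega> in M. indicator A \<omega> = (indicator low_set \<omega> :: real)"
  unfolding low_set_def
  by (rule integral_mult_indicator_sublevel_eq_imp_AE[OF integrable_\<gamma> assms(1) refl])
     (use assms prob_low_set c_pos in \<open>auto simp: low_set_price_def low_set_def\<close>)

lemma G_bd_le_sublevel_payoff:
  assumes "g \<in> G_bd M X \<gamma> x0 m" and A: "A = {\<omega>\<in>space M. g (X \<omega>) \<le> s}"
  shows "AE \<omega> in M. \<gamma> (X \<omega>) * g (X \<omega>) \<le> \<gamma> (X \<omega>) * (m - (m - s) * indicator A \<omega>)"
  using G_bdD(2)[OF assms(1)] AE_space
  by eventually_elim (auto simp: A indicator_def less_imp_le[OF \<gamma>_pos] intro!: mult_left_mono)

lemma integral_G_bd_le_threshold_payoff: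
  assumes g: "g \<in> G_bd M X \<gamma> x0 m" and "s \<le> m" and "p \<le> prob {\<omega>\<in>space M. g (X \<omega>) \<le> s}"
  shows "(\<integral>\<omega>. \<gamma> (X \<omega>) * g (X \<omega>) \<partial>M) \<le> m - (m - s) * low_set_price"
proof -
  have [measurable]: "g \<in> borel_measurable borel"
    using G_bdD(1)[OF g] .
  define A where "A = {\<omega>\<in>space M. g (X \<omega>) \<le> s}"
  have [measurable]: "A \<in> sets M"
    unfolding A_def by measurable
  have "(\<integral>\<omega>. \<gamma> (X \<omega>) * g (X \<omega>) \<partial>M) \<le> (\<integral>\<omega>. \<gamma> (X \<omega>) * (m - (m - s) * indicator A \<omega>) \<partial>M)"
    by (intro integral_mono_AE integrable_G_bd[OF g] integral_indicator_payoff(1)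
        G_bd_le_sublevel_payoff[OF g A_def]) simp
  also have "\<dots> = m - (m - s) * (\<integral>\<omega>. \<gamma> (X \<omega>) * indicator A \<omega> \<partial>M)"
    by (simp add: integral_indicator_payoff(2))
  also have "\<dots> \<le> m - (m - s) * low_set_price"
    using low_set_price_le[of A] assms(2,3) unfolding A_def by (simp add: mult_left_mono)
  finally show ?thesis .
qed

lemma AE_eq_threshold_payoff:
  assumes g: "g \<in> G_bd M X \<gamma> x0 m" and "s < m" and "p \<le> prob {\<omega>\<in>space M. g (X \<omega>) \<le> s}"
    and "m - (m - s) * low_set_price \<le> (\<integral>\<omega>. \<gamma> (X \<omega>) * g (X \<omega>) \<partial>M)"
  shows "AE \<omega> in M. g (X \<omega>) = threshold_payoff s (X \<omega>)"
proof -
  have [measurable]: "g \<in> borel_measurable borel"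
    using G_bdD(1)[OF g] .
  define A where "A = {\<omega>\<in>space M. g (X \<omega>) \<le> s}"
  have [measurable]: "A \<in> sets M"
    unfolding A_def by measurable
  define D where "D \<omega> = \<gamma> (X \<omega>) * (m - (m - s) * indicator A \<omega>) - \<gamma> (X \<omega>) * g (X \<omega>)" for \<omega>
  have D_int: "integrable M D"
    unfolding D_def using integral_indicator_payoff(1) integrable_G_bd[OF g] by simp
  have D_nonneg: "AE \<omega> in M. 0 \<le> D \<omega>"
    using G_bd_le_sublevel_payoff[OF g A_def] by eventually_elim (simp add: D_def)
  define I where "I = (\<integral>\<omega>. \<gamma> (X \<omega>) * indicator A \<omega> \<partial>M)"
  have D_integral: "integral\<^sup>L M D = m - (m - s) * I - (\<integral>\<omega>. \<gamma> (X \<omega>) * g (X \<omega>) \<partial>M)"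
    unfolding D_def I_def using integral_indicator_payoff integrable_G_bd[OF g] by simp
  have "0 \<le> integral\<^sup>L M D"
    using D_nonneg by (rule integral_nonneg_AE)
  then have "(m - s) * I \<le> (m - s) * low_set_price"
    using D_integral assms(4) by linarith
  moreover have "low_set_price \<le> I"
    using low_set_price_le[of A] assms(3) unfolding A_def I_def by simp
  ultimately have price_eq: "I = low_set_price"
    using \<open>s < m\<close> by (simp add: mult_le_cancel_left_pos)
  then have "integral\<^sup>L M D = 0"
    using D_integral assms(4) \<open>0 \<le> integral\<^sup>L M D\<close> by simp
  with D_int D_nonneg have "AE \<omega> in M. D \<omega> = 0"
    by (simp add: integral_nonneg_eq_0_iff_AE)
  moreover have "AE \<omega> in M. indicator A \<omega> = (indicator low_set \<omega> :: real)"
    using low_set_price_eq_imp_AE[of A] price_eq assms(3) unfolding A_def I_def by simp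
  ultimately show ?thesis
    using AE_space
  proof eventually_elim
    case (elim \<omega>)
    then have "m - (m - s) * indicator low_set \<omega> = g (X \<omega>)"
      using \<gamma>_pos[of "X \<omega>"] by (simp add: D_def)
    then show ?case
      using elim(3) by (simp add: threshold_payoff_eq)
  qed
qed

lemma budget_le_VaR_G_bd:
  assumes g: "g \<in> G_bd M X \<gamma> x0 m"
  shows "x0 \<le> m - (m - VaR M p (\<lambda>\<omega>. g (X \<omega>))) * low_set_price"
proof (cases "VaR M p (\<lambda>\<omega>. g (X \<omega>)) \<le> m")
  case True
  then show ?thesis
    using G_bdD(3)[OF g] integral_G_bd_le_threshold_payoff[OF g True VaR_G_bd(1)[OF g]] by simp
next
  case False
  then have "(m - VaR M p (\<lambda>\<omega>. g (X \<omega>))) * low_set_price \<le> 0"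
    using low_set_price_nonneg by (intro mult_nonpos_nonneg) auto
  then show ?thesis
    using budget by linarith
qed

lemma bdd_below_VaR_G_bd: "bdd_below ((\<lambda>g. VaR M p (\<lambda>\<omega>. g (X \<omega>))) ` G_bd M X \<gamma> x0 m)"
  using VaR_G_bd(2) by (auto simp: bdd_below_def)

lemma min_VaR_le_VaR: "g \<in> G_bd M X \<gamma> x0 m \<Longrightarrow> min_VaR \<le> VaR M p (\<lambda>\<omega>. g (X \<omega>))"
  unfolding min_VaR_def by (rule cInf_lower[OF imageI bdd_below_VaR_G_bd])

lemma min_VaR_le: "min_VaR \<le> m"
  using min_VaR_le_VaR[OF threshold_payoff_in_G_bd[of m]] VaR_threshold_payoff[of m] budget by simp

lemma budget_le_min_VaR: "x0 \<le> m - (m - min_VaR) * low_set_price"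
proof (cases "low_set_price = 0")
  case True
  then show ?thesis
    using budget by simp
next
  case False
  then have price_pos: "0 < low_set_price"
    using low_set_price_nonneg by simp
  have "m - (m - x0) / low_set_price \<le> VaR M p (\<lambda>\<omega>. g (X \<omega>))" if "g \<in> G_bd M X \<gamma> x0 m" for g
    using budget_le_VaR_G_bd[OF that] price_pos by (simp add: field_simps)
  then have "m - (m - x0) / low_set_price \<le> min_VaR"
    unfolding min_VaR_def using threshold_payoff_in_G_bd[of m] budget
    by (intro cInf_greatest) auto
  then show ?thesis
    using price_pos by (simp add: field_simps)
qed

(* Otherwise the threshold payoff with a value slightly below min_VaR would still be admissible. *)
lemma min_VaR_budget_le:
  assumes "0 < min_VaR"
  shows "m - (m - min_VaR) * low_set_price \<le> x0"
proof (rule ccontr)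
  define d where "d = m - (m - min_VaR) * low_set_price - x0"
  assume "\<not> ?thesis"
  then have "0 < d"
    unfolding d_def by simp
  define \<delta> where "\<delta> = min (min_VaR / 2) (d / (low_set_price + 1))"
  define v where "v = min_VaR - \<delta>"
  have "0 < \<delta>"
    unfolding \<delta>_def using assms \<open>0 < d\<close> low_set_price_nonneg by simp
  have "\<delta> \<le> min_VaR / 2"
    unfolding \<delta>_def by (rule min.cobounded1)
  have "\<delta> * low_set_price \<le> d / (low_set_price + 1) * low_set_price"
    unfolding \<delta>_def using low_set_price_nonneg by (intro mult_right_mono) auto
  also have "\<dots> \<le> d"
    using \<open>0 < d\<close> low_set_price_nonneg by (simp add: field_simps)
  finally have "\<delta> * low_set_price \<le> d" .
  then have "x0 \<le> m - (m - v) * low_set_price"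
    unfolding v_def d_def by (simp add: algebra_simps)
  moreover have "0 \<le> v" and "v \<le> m" and "v < min_VaR"
    unfolding v_def using \<open>0 < \<delta>\<close> \<open>\<delta> \<le> min_VaR / 2\<close> min_VaR_le by auto
  ultimately show False
    using min_VaR_le_VaR[OF threshold_payoff_in_G_bd] VaR_threshold_payoff by fastforce
qed

end

theorem corollary2:
  fixes M :: "'a measure" and X :: "'a \<Rightarrow> real" and \<gamma> :: "real \<Rightarrow> real"
    and p m x0 :: real
  assumes "prob_space M" and "atomless M"
    and "p \<in> {0<..<1}"
    and "X \<in> borel_measurable M" and "\<forall>\<omega>\<in>space M. X \<omega> \<ge> 0"
    and "pos_density_on_support M X"
    and "continuous_on UNIV \<gamma>" and "\<forall>x. \<gamma> x > 0"
    and "integrable M (\<lambda>\<omega>. \<gamma> (X \<omega>))" and "(\<integral>\<omega>. \<gamma> (X \<omega>) \<partial>M) = 1"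
    and "integrable M (\<lambda>\<omega>. \<gamma> (X \<omega>) * X \<omega>)"
    and "m > 0" and "0 \<le> x0" and "x0 < m"
    and q'_def: "q' = Inf ((\<lambda>g. VaR M p (\<lambda>\<omega>. g (X \<omega>))) ` G_bd M X \<gamma> x0 m)"
    and "q' > 0"
    and c_def: "c = VaR M p (\<lambda>\<omega>. \<gamma> (X \<omega>))"
    and "measure M {\<omega> \<in> space M. \<gamma> (X \<omega>) \<le> c} = p"
  shows "(\<lambda>x. if \<gamma> x > c then m else q') \<in> G_bd M X \<gamma> x0 m
    \<and> VaR M p (\<lambda>\<omega>. if \<gamma> (X \<omega>) > c then m else q') = q'
    \<and> (\<forall>g \<in> G_bd M X \<gamma> x0 m. VaR M p (\<lambda>\<omega>. g (X \<omega>)) = q' \<longrightarrow>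
         (AE \<omega> in M. g (X \<omega>) = (if \<gamma> (X \<omega>) > c then m else q')))"
proof -
  interpret VaR_minimization M X \<gamma> p m x0 c
  proof (intro VaR_minimization.intro VaR_minimization_axioms.intro)
    show "\<gamma> \<in> borel_measurable borel"
      using \<open>continuous_on UNIV \<gamma>\<close> by (rule borel_measurable_continuous_onI)
  qed (use assms in simp_all)
  have q'_eq: "q' = min_VaR"
    unfolding q'_def min_VaR_def ..
  have budget_eq: "x0 = m - (m - q') * low_set_price"
    using budget_le_min_VaR min_VaR_budget_le \<open>q' > 0\<close> unfolding q'_eq by (simp add: antisym)
  have "q' < m"
  proof -
    have "q' \<noteq> m"
      using budget_eq \<open>x0 < m\<close> by auto
    then show ?thesis
      using min_VaR_le unfolding q'_eq by simp
  qed
  have "threshold_payoff q' \<in> G_bd M X \<gamma> x0 m"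
    using threshold_payoff_in_G_bd \<open>q' > 0\<close> \<open>q' < m\<close> budget_eq by simp
  moreover have "VaR M p (\<lambda>\<omega>. threshold_payoff q' (X \<omega>)) = q'"
    using VaR_threshold_payoff \<open>q' < m\<close> by simp
  moreover have "AE \<omega> in M. g (X \<omega>) = threshold_payoff q' (X \<omega>)"
    if "g \<in> G_bd M X \<gamma> x0 m" and "VaR M p (\<lambda>\<omega>. g (X \<omega>)) = q'" for g
    using AE_eq_threshold_payoff[OF that(1) \<open>q' < m\<close>] VaR_G_bd(1)[OF that(1)] G_bdD(3)[OF that(1)]
      that(2) budget_eq by simp
  ultimately show ?thesis
    unfolding threshold_payoff_def[abs_def] by blast
qed

end
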